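(* Let $M\ge0$. There is no infinite antichain $S_1,S_2,\dots$ in $(\mathrm{RL},\le_{RL})$, with $S_i$ of type $(d_i,n_i)$, for which the sequence $(n_i)_i$ is bounded.
   Context: Fix an integer $M\ge0$. A reading list of type $(d,n)$ is a tuple $S=(S^1,\dots,S^n)$ of $d$-element subsets of $[Md]=\{1,\dots,Md\}$ (each $S^i$ viewed as an increasing word). $\mathrm{RL}$ denotes the set of all reading lists of all types. For $S=(S^1,\dots,S^n)$ of type $(d,n)$ and $T=(T^1,\dots,T^m)$ of type $(e,m)$, define $S\le_{RL}T$ iff there exist indices $1\le k_1<k_2<\cdots<k_n\le m$ and maps $f_i:S^i\to T^{k_i}$ ($i=1,\dots,n$), each strictly increasing, such that $f_i(x)=f_j(x)$ for all $i,j$ and all $x\in S^i\cap S^j$. An antichain is a sequence of pairwise incomparable elements. *)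

theory Defs
  imports Main
begin

text \<open>A reading list of type (d,n) (for fixed M) is represented as a pair (d, S)
  where S is a list of length n of d-element subsets of {1..M*d}.\<close>

type_synonym reading_list = "nat \<times> nat set list"

definition RL :: "nat \<Rightarrow> reading_list set" where
  "RL M = {(d, S). \<forall>A \<in> set S. A \<subseteq> {1..M * d} \<and> card A = d}"

definition rl_type :: "reading_list \<Rightarrow> nat \<times> nat" where
  "rl_type R = (fst R, length (snd R))"

definition le_RL :: "reading_list \<Rightarrow> reading_list \<Rightarrow> bool" where
  "le_RL R R' \<longleftrightarrow>
     (let S = snd R; T = snd R'; n = length S; m = length T in
      \<exists>k :: nat \<Rightarrow> nat. \<exists>f :: nat \<Rightarrow> nat \<Rightarrow> nat.
        strict_mono_on {..<n} k \<and> (\<forall>i<n. k i < m) \<and>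
        (\<forall>i<n. strict_mono_on (S ! i) (f i) \<and> f i ` (S ! i) \<subseteq> T ! (k i)) \<and>
        (\<forall>i<n. \<forall>j<n. \<forall>x \<in> S ! i \<inter> S ! j. f i x = f j x))"

definition antichain_seq_RL :: "nat \<Rightarrow> (nat \<Rightarrow> reading_list) \<Rightarrow> bool" where
  "antichain_seq_RL M Sq \<longleftrightarrow>
     (\<forall>i. Sq i \<in> RL M) \<and> (\<forall>i j. i \<noteq> j \<longrightarrow> \<not> le_RL (Sq i) (Sq j))"

end

theory Submission
  imports Defs "HOL-Library.Sublist" "HOL-Library.Infinite_Set"
begin

text \<open>A reading list \<open>S = (S\<^sup>1, \<dots>, S\<^sup>n)\<close> is encoded as a word over the finite alphabet of
  subsets of \<open>{0..<n}\<close>: run through the elements \<open>x\<close> of \<open>\<Union>\<^sub>i S\<^sup>i\<close> in increasing order and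
  write down the set of indices \<open>i\<close> with \<open>x \<in> S\<^sup>i\<close>. If the words of two reading lists of the
  same length \<open>n\<close> embed as subwords, the embedding is a single strictly increasing map on
  \<open>\<Union>\<^sub>i S\<^sup>i\<close> carrying each \<open>S\<^sup>i\<close> into \<open>T\<^sup>i\<close>, which witnesses \<open>S \<le>\<^sub>R\<^sub>L T\<close> with \<open>k\<^sub>i = i\<close>.
  In a sequence with bounded \<open>n\<close>, infinitely many members share the same \<open>n\<close>, and
  Higman's lemma for the finite alphabet \<open>Pow {0..<n}\<close> yields a comparable pair among them.\<close>

definition bad_seq :: "'a set \<Rightarrow> (nat \<Rightarrow> 'a list) \<Rightarrow> bool" where
  "bad_seq A f \<longleftrightarrow> (\<forall>i. set (f i) \<subseteq> A) \<and> (\<forall>i j. i < j \<longrightarrow> \<not> subseq (f i) (f j))"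

definition bad_extensions :: "'a set \<Rightarrow> 'a list list \<Rightarrow> (nat \<Rightarrow> 'a list) set" where
  "bad_extensions A p = {g. bad_seq A g \<and> (\<forall>i<length p. g i = p ! i)}"

definition shortest_bad_extension :: "'a set \<Rightarrow> 'a list list \<Rightarrow> nat \<Rightarrow> 'a list" where
  "shortest_bad_extension A p =
     (ARG_MIN (\<lambda>g. length (g (length p))) g. g \<in> bad_extensions A p)"

primrec minimal_bad_prefix :: "'a set \<Rightarrow> nat \<Rightarrow> 'a list list" where
  "minimal_bad_prefix A 0 = []"
| "minimal_bad_prefix A (Suc n) =
     minimal_bad_prefix A n @ [shortest_bad_extension A (minimal_bad_prefix A n) n]"

definition minimal_bad_seq :: "'a set \<Rightarrow> nat \<Rightarrow> 'a list" where
  "minimal_bad_seq A i = minimal_bad_prefix A (Suc i) ! i"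

lemma length_minimal_bad_prefix [simp]: "length (minimal_bad_prefix A n) = n"
  by (induction n) auto

lemma nth_minimal_bad_prefix: "i < n \<Longrightarrow> minimal_bad_prefix A n ! i = minimal_bad_seq A i"
proof (induction n)
  case (Suc n)
  then show ?case
    by (cases "i < n") (auto simp: nth_append minimal_bad_seq_def less_Suc_eq)
qed simp

lemma shortest_bad_extension:
  assumes "g \<in> bad_extensions A p"
  shows "shortest_bad_extension A p \<in> bad_extensions A p"
    and "length (shortest_bad_extension A p (length p)) \<le> length (g (length p))"
  using assms arg_min_nat_lemma[where P = "\<lambda>g. g \<in> bad_extensions A p"
      and m = "\<lambda>g. length (g (length p))", OF assms]
  by (auto simp: shortest_bad_extension_def)

lemma bad_extensions_minimal_bad_prefix:
  assumes "bad_seq A f"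
  shows "shortest_bad_extension A (minimal_bad_prefix A n) \<in> bad_extensions A (minimal_bad_prefix A n)"
proof (induction n)
  case 0
  show ?case by (rule shortest_bad_extension(1)[of f]) (use assms in \<open>simp add: bad_extensions_def\<close>)
next
  case (Suc n)
  let ?g = "shortest_bad_extension A (minimal_bad_prefix A n)"
  have "?g \<in> bad_extensions A (minimal_bad_prefix A (Suc n))"
    using Suc.IH by (auto simp: bad_extensions_def nth_append less_Suc_eq)
  then show ?case by (rule shortest_bad_extension(1))
qed

lemma bad_extension_agreeing_with_minimal_bad_seq:
  assumes "bad_seq A f"
  obtains g where "bad_seq A g" and "\<And>i. i < n \<Longrightarrow> g i = minimal_bad_seq A i"
  using bad_extensions_minimal_bad_prefix[OF assms, of n]
  by (auto simp: bad_extensions_def nth_minimal_bad_prefix)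

lemma bad_seq_minimal_bad_seq:
  assumes "bad_seq A f"
  shows "bad_seq A (minimal_bad_seq A)"
  unfolding bad_seq_def
proof (intro conjI allI impI)
  fix i
  obtain g where "bad_seq A g" "g i = minimal_bad_seq A i"
    using bad_extension_agreeing_with_minimal_bad_seq[OF assms, of "Suc i"] by blast
  then show "set (minimal_bad_seq A i) \<subseteq> A" by (metis bad_seq_def)
next
  fix i j :: nat
  assume "i < j"
  obtain g where "bad_seq A g" "\<And>k. k < Suc j \<Longrightarrow> g k = minimal_bad_seq A k"
    using bad_extension_agreeing_with_minimal_bad_seq[OF assms, of "Suc j"] by blast
  with \<open>i < j\<close> show "\<not> subseq (minimal_bad_seq A i) (minimal_bad_seq A j)"
    by (metis bad_seq_def lessI less_SucI)
qed

lemma length_minimal_bad_seq_le: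
  assumes "bad_seq A h" and "\<And>i. i < n \<Longrightarrow> h i = minimal_bad_seq A i"
  shows "length (minimal_bad_seq A n) \<le> length (h n)"
proof -
  have "h \<in> bad_extensions A (minimal_bad_prefix A n)"
    using assms by (simp add: bad_extensions_def nth_minimal_bad_prefix)
  moreover have "minimal_bad_seq A n = shortest_bad_extension A (minimal_bad_prefix A n) n"
    by (simp add: minimal_bad_seq_def nth_append)
  ultimately show ?thesis using shortest_bad_extension(2) by fastforce
qed

lemma bad_seq_nonempty: "bad_seq A f \<Longrightarrow> f i \<noteq> []"
  by (metis bad_seq_def lessI list_emb_Nil)

lemma finite_range_imp_constant_subseq:
  assumes "finite (range f)"
  obtains r :: "nat \<Rightarrow> nat" and c where "strict_mono r" and "\<And>k. f (r k) = c"
proof -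
  obtain c where "infinite (f -` {c})"
    using inf_img_fin_domE[OF assms infinite_UNIV_nat] by blast
  with infinite_enumerate obtain r :: "nat \<Rightarrow> nat" where "strict_mono r" "\<forall>k. r k \<in> f -` {c}"
    by blast
  then show thesis using that by auto
qed

text \<open>Replacing \<open>f (r k) = a # t k\<close> by \<open>t k\<close> from position \<open>r 0\<close> on keeps a sequence bad:
  a subword relation among the new terms lifts back along \<open>idx\<close> to one among the old terms.\<close>

lemma bad_seq_splice_tails:
  assumes bad: "bad_seq A f" and r: "strict_mono r" and f_r: "\<And>k. f (r k) = a # t k"
  shows "bad_seq A (\<lambda>i. if i < r 0 then f i else t (i - r 0))" (is "bad_seq A ?g")
  unfolding bad_seq_def
proof (intro conjI allI impI)
  fix i
  show "set (?g i) \<subseteq> A"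
    using bad f_r[of "i - r 0"] by (auto simp: bad_seq_def) (metis list.set_intros(2) subsetD)
next
  fix i j :: nat
  assume "i < j"
  define idx where "idx i = (if i < r 0 then i else r (i - r 0))" for i
  have "r 0 \<le> r (j - r 0)"
    using r by (simp add: strict_mono_less_eq)
  with \<open>i < j\<close> r have "idx i < idx j"
    by (auto simp: idx_def strict_mono_less)
  moreover have "subseq (f (idx i)) (f (idx j))" if "subseq (?g i) (?g j)"
    using that \<open>i < j\<close> f_r by (auto simp: idx_def split: if_splits)
  ultimately show "\<not> subseq (?g i) (?g j)"
    using bad by (auto simp: bad_seq_def)
qed

text \<open>Nash-Williams' minimal bad sequence argument.\<close>

theorem higman:
  assumes "finite A"
  shows "\<not> bad_seq A f"
proof
  assume bad_f: "bad_seq A f"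
  let ?m = "minimal_bad_seq A"
  have bad_m: "bad_seq A ?m"
    using bad_seq_minimal_bad_seq[OF bad_f] .
  have "range (\<lambda>i. hd (?m i)) \<subseteq> A"
    using bad_m bad_seq_nonempty[OF bad_m] hd_in_set by (fastforce simp: bad_seq_def)
  with assms obtain r :: "nat \<Rightarrow> nat" and a
    where r: "strict_mono r" and hd_r: "\<And>k. hd (?m (r k)) = a"
    by (metis finite_range_imp_constant_subseq finite_subset)
  have m_r: "?m (r k) = a # tl (?m (r k))" for k
    using hd_r[of k] bad_seq_nonempty[OF bad_m] by (metis list.collapse)
  define g where "g i = (if i < r 0 then ?m i else tl (?m (r (i - r 0))))" for i
  have "bad_seq A g"
    unfolding g_def by (rule bad_seq_splice_tails[OF bad_m r m_r])
  then have "length (?m (r 0)) \<le> length (g (r 0))"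
    by (rule length_minimal_bad_seq_le) (simp add: g_def)
  moreover have "length (g (r 0)) < length (?m (r 0))"
    using bad_seq_nonempty[OF bad_m] by (simp add: g_def)
  ultimately show False by simp
qed

lemma list_emb_map_sorted_imp_strict_mono:
  fixes xs :: "'a :: linorder list" and ys :: "'b :: linorder list"
  assumes "list_emb P (map p xs) (map q ys)" and "sorted_wrt (<) xs" and "sorted_wrt (<) ys"
  shows "\<exists>g. strict_mono_on (set xs) g \<and> (\<forall>x\<in>set xs. g x \<in> set ys \<and> P (p x) (q (g x)))"
  using assms
proof (induction "map p xs" "map q ys" arbitrary: xs ys rule: list_emb.induct)
  case list_emb_Nil
  then show ?case by (auto simp: strict_mono_on_def)
next
  case (list_emb_Cons v)
  then obtain y ys' where "ys = y # ys'" by (cases ys) auto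
  with list_emb_Cons show ?case by fastforce
next
  case (list_emb_Cons2 u v us vs)
  then obtain x xs' y ys' where xs: "xs = x # xs'" "us = map p xs'" "u = p x"
    and ys: "ys = y # ys'" "vs = map q ys'" "v = q y"
    by (cases xs; cases ys) auto
  obtain g where g: "strict_mono_on (set xs') g" "\<forall>x\<in>set xs'. g x \<in> set ys' \<and> P (p x) (q (g x))"
    using list_emb_Cons2.hyps(3)[OF xs(2) ys(2)] list_emb_Cons2.prems xs ys by auto
  have x_less: "\<forall>b\<in>set xs'. x < b" and y_less: "\<forall>b\<in>set ys'. y < b"
    using list_emb_Cons2.prems xs ys by auto
  then have "strict_mono_on (set xs) (g(x := y))"
    using g by (auto simp: xs strict_mono_on_def)
  moreover have "\<forall>b\<in>set xs. (g(x := y)) b \<in> set ys \<and> P (p b) (q ((g(x := y)) b))"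
    using g(2) x_less xs ys list_emb_Cons2.hyps by auto
  ultimately show ?case by blast
qed

definition membership_word :: "nat set list \<Rightarrow> nat set list" where
  "membership_word S =
     map (\<lambda>x. {i. i < length S \<and> x \<in> S ! i}) (sorted_list_of_set (\<Union> (set S)))"

lemma set_membership_word_subset: "set (membership_word S) \<subseteq> Pow {..<length S}"
  by (auto simp: membership_word_def)

lemma le_RL_if_subseq_membership_word:
  assumes fin: "finite (\<Union> (set S))" and len: "length S = length T"
    and sub: "subseq (membership_word S) (membership_word T)"
  shows "le_RL (d, S) (e, T)"
proof -
  obtain g where g_mono: "strict_mono_on (\<Union> (set S)) g"
    and g_mem: "\<And>x. x \<in> \<Union> (set S) \<Longrightarrow>
                  {i. i < length S \<and> x \<in> S ! i} = {i. i < length S \<and> g x \<in> T ! i}"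
    using list_emb_map_sorted_imp_strict_mono[OF sub[unfolded membership_word_def]] fin len
    by auto
  have S_sub: "i < length S \<Longrightarrow> S ! i \<subseteq> \<Union> (set S)" for i
    by (auto intro: nth_mem)
  have "g ` (S ! i) \<subseteq> T ! i" if "i < length S" for i
    using g_mem S_sub that by blast
  moreover have "strict_mono_on (S ! i) g" if "i < length S" for i
    using g_mono S_sub[OF that] unfolding strict_mono_on_def by blast
  ultimately show ?thesis
    unfolding le_RL_def Let_def snd_conv
    by (intro exI[of _ id] exI[of _ "\<lambda>_. g"]) (auto simp: len strict_mono_on_def)
qed

lemma finite_Union_reading_list: "R \<in> RL M \<Longrightarrow> finite (\<Union> (set (snd R)))"
  by (cases R) (auto simp: RL_def intro: finite_subset)

theorem mainTheorem5:
  fixes M :: nat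
  shows "\<not> (\<exists>Sq :: nat \<Rightarrow> reading_list. antichain_seq_RL M Sq \<and>
              (\<exists>B. \<forall>i. snd (rl_type (Sq i)) \<le> B))"
proof
  assume "\<exists>Sq :: nat \<Rightarrow> reading_list. antichain_seq_RL M Sq \<and>
              (\<exists>B. \<forall>i. snd (rl_type (Sq i)) \<le> B)"
  then obtain Sq B where ac: "antichain_seq_RL M Sq" and bd: "\<And>i. length (snd (Sq i)) \<le> B"
    by (auto simp: rl_type_def)
  have "finite (range (\<lambda>i. length (snd (Sq i))))"
    using bd by (auto intro: finite_subset[of _ "{..B}"])
  then obtain r :: "nat \<Rightarrow> nat" and n where r: "strict_mono r"
    and len: "\<And>k. length (snd (Sq (r k))) = n"
    by (metis finite_range_imp_constant_subseq)
  let ?w = "\<lambda>k. membership_word (snd (Sq (r k)))"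
  have "\<not> bad_seq (Pow {..<n}) ?w"
    by (rule higman) simp
  moreover have "set (?w k) \<subseteq> Pow {..<n}" for k
    using set_membership_word_subset len by metis
  ultimately obtain i j where "i < j" and "subseq (?w i) (?w j)"
    by (auto simp: bad_seq_def)
  moreover have "finite (\<Union> (set (snd (Sq (r i)))))"
    using ac by (intro finite_Union_reading_list[of _ M]) (simp add: antichain_seq_RL_def)
  ultimately have "le_RL (Sq (r i)) (Sq (r j))"
    using le_RL_if_subseq_membership_word[of "snd (Sq (r i))" "snd (Sq (r j))"] len
    by (metis prod.collapse)
  moreover have "r i \<noteq> r j"
    using r \<open>i < j\<close> by (metis less_irrefl strict_mono_less)
  ultimately show False
    using ac by (auto simp: antichain_seq_RL_def)
qed

end
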